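(* Let $(H_1,+_1,\circ_1)$ and $(H_2,+_2,\circ_2)$ be commutative multiplicative hyperrings with identity, and let $P_1$ and $P_2$ be nonzero proper strong $\mathcal{C}$-hyperideals of $H_1$ and $H_2$, respectively. Then $P_1$ is an sdf-absorbing hyperideal of $H_1$ if and only if $P_1\times H_2$ is an sdf-absorbing hyperideal of $H_1\times H_2$.
   Context: A commutative multiplicative hyperring $(H,+,\circ)$ consists of an abelian group $(H,+)$ and an associative, commutative hyperoperation $\circ: H\times H\to P^*(H)$ with $x\circ(y+z)\subseteq x\circ y+x\circ z$ and $x\circ(-y)=-(x\circ y)=(-x)\circ y$. For subsets $A,B$, $A\circ B=\bigcup_{a\in A,b\in B}a\circ b$, $A\pm B=\{a\pm b\}$; $x^2=x\circ x$. Identity: $x\in x\circ 1$ for all $x$. $H_1\times H_2$ is the hyperring with $(x_1,x_2)+(y_1,y_2)=(x_1+_1y_1,x_2+_2y_2)$ and $(x_1,x_2)\circ(y_1,y_2)=\{(a,b): a\in x_1\circ_1y_1, b\in x_2\circ_2y_2\}$. A hyperideal is a nonempty $P$ with $x-y\in P$ and $r\circ x\subseteq P$ for $x,y\in P$, $r\in H$. Let $\mathcal{C}=\{c_1\circ\cdots\circ c_n: c_i\in H\}$ and $\mathfrak{C}=\{\sum_{i=1}^m C_i: C_i\in\mathcal{C}\}$; $P$ is a strong $\mathcal{C}$-hyperideal if for every $D\in\mathfrak{C}$, $D\cap P\neq\varnothing$ implies $D\subseteq P$. A proper hyperideal $P$ is sdf-absorbing if whenever $x,y$ are nonzero and $x^2-y^2\subseteq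 P$, then $x-y\in P$ or $x+y\in P$. *)

theory Defs
  imports Main "HOL-Library.Product_Plus"
begin

text \<open>A hyperoperation on the whole type 'a (the carrier of the additive abelian group).\<close>
type_synonym 'a hop = "'a \<Rightarrow> 'a \<Rightarrow> 'a set"

definition hsetmult :: "'a hop \<Rightarrow> 'a set \<Rightarrow> 'a set \<Rightarrow> 'a set" where
  "hsetmult m A B = (\<Union>a\<in>A. \<Union>b\<in>B. m a b)"

definition hsetplus :: "'a::ab_group_add set \<Rightarrow> 'a set \<Rightarrow> 'a set" where
  "hsetplus A B = {a + b | a b. a \<in> A \<and> b \<in> B}"

definition hsetminus :: "'a::ab_group_add set \<Rightarrow> 'a set \<Rightarrow> 'a set" where
  "hsetminus A B = {a - b | a b. a \<in> A \<and> b \<in> B}"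

definition hsetneg :: "'a::ab_group_add set \<Rightarrow> 'a set" where
  "hsetneg A = {- a | a. a \<in> A}"

definition comm_mult_hyperring :: "('a::ab_group_add) hop \<Rightarrow> bool" where
  "comm_mult_hyperring m \<longleftrightarrow>
     (\<forall>x y. m x y \<noteq> {}) \<and>
     (\<forall>x y z. hsetmult m (m x y) {z} = hsetmult m {x} (m y z)) \<and>
     (\<forall>x y. m x y = m y x) \<and>
     (\<forall>x y z. m x (y + z) \<subseteq> hsetplus (m x y) (m x z)) \<and>
     (\<forall>x y. m x (- y) = hsetneg (m x y) \<and> hsetneg (m x y) = m (- x) y)"

definition has_identity :: "('a::ab_group_add) hop \<Rightarrow> bool" where
  "has_identity m \<longleftrightarrow> (\<exists>e. \<forall>x. x \<in> m x e)"

definition hyperideal :: "('a::ab_group_add) hop \<Rightarrow> 'a set \<Rightarrow> bool" where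
  "hyperideal m P \<longleftrightarrow> P \<noteq> {} \<and> (\<forall>x\<in>P. \<forall>y\<in>P. x - y \<in> P) \<and>
     (\<forall>r x. x \<in> P \<longrightarrow> m r x \<subseteq> P)"

definition proper_hyperideal :: "('a::ab_group_add) hop \<Rightarrow> 'a set \<Rightarrow> bool" where
  "proper_hyperideal m P \<longleftrightarrow> hyperideal m P \<and> P \<noteq> UNIV"

fun hlistprod :: "'a hop \<Rightarrow> 'a list \<Rightarrow> 'a set" where
  "hlistprod m [] = {}"
| "hlistprod m [c] = {c}"
| "hlistprod m (c # cs) = hsetmult m {c} (hlistprod m cs)"

definition hyper_C :: "'a hop \<Rightarrow> 'a set set" where
  "hyper_C m = {hlistprod m cs | cs. cs \<noteq> []}"

fun hlistsum :: "('a::ab_group_add) set list \<Rightarrow> 'a set" where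
  "hlistsum [] = {0}"
| "hlistsum [C] = C"
| "hlistsum (C # Cs) = hsetplus C (hlistsum Cs)"

definition hyper_frakC :: "('a::ab_group_add) hop \<Rightarrow> 'a set set" where
  "hyper_frakC m = {hlistsum Cs | Cs. Cs \<noteq> [] \<and> set Cs \<subseteq> hyper_C m}"

definition strong_C_hyperideal :: "('a::ab_group_add) hop \<Rightarrow> 'a set \<Rightarrow> bool" where
  "strong_C_hyperideal m P \<longleftrightarrow> hyperideal m P \<and>
     (\<forall>D\<in>hyper_frakC m. D \<inter> P \<noteq> {} \<longrightarrow> D \<subseteq> P)"

definition sdf_absorbing :: "('a::ab_group_add) hop \<Rightarrow> 'a set \<Rightarrow> bool" where
  "sdf_absorbing m P \<longleftrightarrow> proper_hyperideal m P \<and>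
     (\<forall>x y. x \<noteq> 0 \<longrightarrow> y \<noteq> 0 \<longrightarrow> hsetminus (m x x) (m y y) \<subseteq> P \<longrightarrow>
        x - y \<in> P \<or> x + y \<in> P)"

text \<open>Product hyperoperation on H1 \<times> H2 (addition is componentwise via Product_Plus).\<close>
definition prod_hop :: "'a hop \<Rightarrow> 'b hop \<Rightarrow> ('a \<times> 'b) hop" where
  "prod_hop m1 m2 x y = m1 (fst x) (fst y) \<times> m2 (snd x) (snd y)"

end

theory Submission
  imports Defs
begin

text \<open>Membership in \<open>P\<^sub>1 \<times> H\<^sub>2\<close> and the products of \<open>H\<^sub>1 \<times> H\<^sub>2\<close> are both decided on the first
  coordinate (the second factor of a product is never empty), so a difference of squares in
  \<open>H\<^sub>1 \<times> H\<^sub>2\<close> lies in \<open>P\<^sub>1 \<times> H\<^sub>2\<close> iff that of the first coordinates lies in \<open>P\<^sub>1\<close>. This transfers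
  the sdf-condition in both directions, except when one first coordinate vanishes while the pair
  does not. In that case the square of the other coordinate \<open>x\<close> lies in \<open>P\<^sub>1\<close>, and comparing
  \<open>x\<^sup>2\<close> with \<open>p\<^sup>2\<close> for some nonzero \<open>p \<in> P\<^sub>1\<close> gives \<open>x \<plusminus> p \<in> P\<^sub>1\<close>, hence \<open>x \<in> P\<^sub>1\<close>.\<close>

lemma comm_mult_hyperring_nonempty:
  "comm_mult_hyperring m \<Longrightarrow> m x y \<noteq> {}"
  unfolding comm_mult_hyperring_def by blast

lemma hyperideal_diff: "hyperideal m P \<Longrightarrow> x \<in> P \<Longrightarrow> y \<in> P \<Longrightarrow> x - y \<in> P"
  unfolding hyperideal_def by blast

lemma hyperideal_mult: "hyperideal m P \<Longrightarrow> x \<in> P \<Longrightarrow> m r x \<subseteq> P"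
  unfolding hyperideal_def by blast

lemma hyperideal_zero: "hyperideal m P \<Longrightarrow> 0 \<in> P"
  unfolding hyperideal_def by (metis all_not_in_conv diff_self)

lemma hyperideal_uminus: "hyperideal m P \<Longrightarrow> x \<in> P \<Longrightarrow> - x \<in> P"
  using hyperideal_diff hyperideal_zero by (metis diff_0)

lemma hyperideal_add: "hyperideal m P \<Longrightarrow> x \<in> P \<Longrightarrow> y \<in> P \<Longrightarrow> x + y \<in> P"
  using hyperideal_diff hyperideal_uminus by (metis diff_minus_eq_add)

lemma hsetminus_subset_hyperideal_right:
  assumes "hyperideal m P" and "A \<subseteq> P" and "A \<noteq> {}" and "hsetminus A B \<subseteq> P"
  shows "B \<subseteq> P"
proof
  fix b assume "b \<in> B"
  obtain a where "a \<in> A" using \<open>A \<noteq> {}\<close> by blast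
  then have "a - b \<in> P" using \<open>b \<in> B\<close> assms(4) unfolding hsetminus_def by blast
  then have "a - (a - b) \<in> P" using hyperideal_diff assms(1,2) \<open>a \<in> A\<close> by blast
  then show "b \<in> P" by simp
qed

lemma hsetminus_subset_hyperideal_left:
  assumes "hyperideal m P" and "B \<subseteq> P" and "B \<noteq> {}" and "hsetminus A B \<subseteq> P"
  shows "A \<subseteq> P"
proof
  fix a assume "a \<in> A"
  obtain b where "b \<in> B" using \<open>B \<noteq> {}\<close> by blast
  then have "a - b \<in> P" using \<open>a \<in> A\<close> assms(4) unfolding hsetminus_def by blast
  then have "(a - b) + b \<in> P" using hyperideal_add assms(1,2) \<open>b \<in> B\<close> by blast
  then show "a \<in> P" by simp
qed

lemma hsetminus_subset_hyperideal:
  "hyperideal m P \<Longrightarrow> A \<subseteq> P \<Longrightarrow> B \<subseteq> P \<Longrightarrow> hsetminus A B \<subseteq> P"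
  unfolding hsetminus_def using hyperideal_diff by blast

lemma sdf_absorbing_hyperideal: "sdf_absorbing m P \<Longrightarrow> hyperideal m P"
  unfolding sdf_absorbing_def proper_hyperideal_def by blast

lemma sdf_absorbing_square_subset_imp_mem:
  assumes sdf: "sdf_absorbing m P" and "P \<noteq> {0}" and sq: "m x x \<subseteq> P"
  shows "x \<in> P"
proof (cases "x = 0")
  case True
  then show ?thesis using hyperideal_zero sdf_absorbing_hyperideal sdf by blast
next
  case False
  have hi: "hyperideal m P" using sdf by (rule sdf_absorbing_hyperideal)
  obtain p where p: "p \<in> P" "p \<noteq> 0" using \<open>P \<noteq> {0}\<close> hyperideal_zero[OF hi] by blast
  have "hsetminus (m x x) (m p p) \<subseteq> P"
    using hsetminus_subset_hyperideal[OF hi sq hyperideal_mult[OF hi p(1)]] .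
  then have "x - p \<in> P \<or> x + p \<in> P" using sdf False p(2) unfolding sdf_absorbing_def by blast
  moreover have "x = (x - p) + p" "x = (x + p) - p" by simp_all
  ultimately show "x \<in> P" using hyperideal_add[OF hi] hyperideal_diff[OF hi] p(1) by metis
qed

lemma hyperideal_Times_UNIV:
  "hyperideal m1 P \<Longrightarrow> hyperideal (prod_hop m1 m2) (P \<times> UNIV)"
  unfolding hyperideal_def prod_hop_def by (auto simp: subset_iff)

lemma proper_hyperideal_Times_UNIV_iff:
  fixes m2 :: "'b::ab_group_add hop"
  assumes "hyperideal m1 P"
  shows "proper_hyperideal (prod_hop m1 m2) (P \<times> UNIV) \<longleftrightarrow> proper_hyperideal m1 P"
proof -
  have "P \<times> (UNIV :: 'b set) = UNIV \<times> UNIV \<longleftrightarrow> P = UNIV" by (rule Times_eq_cancel2) simp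
  then show ?thesis unfolding proper_hyperideal_def using assms hyperideal_Times_UNIV by auto
qed

lemma hsetminus_prod_hop_subset_Times_UNIV_iff:
  assumes "\<And>u v. m2 u v \<noteq> {}"
  shows "hsetminus (prod_hop m1 m2 x x) (prod_hop m1 m2 y y) \<subseteq> P \<times> UNIV
     \<longleftrightarrow> hsetminus (m1 (fst x) (fst x)) (m1 (fst y) (fst y)) \<subseteq> P"
proof
  assume prod: "hsetminus (prod_hop m1 m2 x x) (prod_hop m1 m2 y y) \<subseteq> P \<times> UNIV"
  show "hsetminus (m1 (fst x) (fst x)) (m1 (fst y) (fst y)) \<subseteq> P"
  proof
    fix z assume "z \<in> hsetminus (m1 (fst x) (fst x)) (m1 (fst y) (fst y))"
    then obtain a b where ab: "z = a - b" "a \<in> m1 (fst x) (fst x)" "b \<in> m1 (fst y) (fst y)"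
      unfolding hsetminus_def by blast
    obtain c d where "c \<in> m2 (snd x) (snd x)" "d \<in> m2 (snd y) (snd y)" using assms by blast
    then have "(a, c) - (b, d) \<in> hsetminus (prod_hop m1 m2 x x) (prod_hop m1 m2 y y)"
      unfolding hsetminus_def prod_hop_def using ab by blast
    then show "z \<in> P" using prod ab(1) by auto
  qed
qed (auto simp: hsetminus_def prod_hop_def)

lemma sdf_absorbing_Times_UNIVD:
  fixes m2 :: "'b::ab_group_add hop"
  assumes ring2: "comm_mult_hyperring m2" and hi: "hyperideal m1 P"
    and sdf: "sdf_absorbing (prod_hop m1 m2) (P \<times> UNIV)"
  shows "sdf_absorbing m1 P"
  unfolding sdf_absorbing_def
proof (intro conjI allI impI)
  show "proper_hyperideal m1 P"
    using sdf proper_hyperideal_Times_UNIV_iff[OF hi] unfolding sdf_absorbing_def by blast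
next
  fix x y :: 'a
  assume "x \<noteq> 0" "y \<noteq> 0" and "hsetminus (m1 x x) (m1 y y) \<subseteq> P"
  moreover have "\<And>u v. m2 u v \<noteq> {}" using ring2 by (rule comm_mult_hyperring_nonempty)
  then have "hsetminus (prod_hop m1 m2 (x, 0) (x, 0)) (prod_hop m1 m2 (y, 0) (y, 0))
      \<subseteq> P \<times> UNIV \<longleftrightarrow> hsetminus (m1 x x) (m1 y y) \<subseteq> P"
    using hsetminus_prod_hop_subset_Times_UNIV_iff[of m2 m1 "(x, 0)" "(y, 0)" P] by simp
  moreover have "(x, 0 :: 'b) \<noteq> 0 \<longleftrightarrow> x \<noteq> 0" "(y, 0 :: 'b) \<noteq> 0 \<longleftrightarrow> y \<noteq> 0"
    by (simp_all add: zero_prod_def)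
  ultimately have "(x, 0 :: 'b) - (y, 0) \<in> P \<times> UNIV \<or> (x, 0 :: 'b) + (y, 0) \<in> P \<times> UNIV"
    using sdf unfolding sdf_absorbing_def by blast
  then show "x - y \<in> P \<or> x + y \<in> P" by simp
qed

lemma sdf_absorbing_Times_UNIV:
  fixes m2 :: "'b::ab_group_add hop"
  assumes ring1: "comm_mult_hyperring m1" and ring2: "comm_mult_hyperring m2"
    and sdf: "sdf_absorbing m1 P" and "P \<noteq> {0}"
  shows "sdf_absorbing (prod_hop m1 m2) (P \<times> UNIV)"
  unfolding sdf_absorbing_def
proof (intro conjI allI impI)
  have hi: "hyperideal m1 P" using sdf by (rule sdf_absorbing_hyperideal)
  then show "proper_hyperideal (prod_hop m1 m2) (P \<times> UNIV)"
    using sdf proper_hyperideal_Times_UNIV_iff unfolding sdf_absorbing_def by blast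
  fix x y :: "'a \<times> 'b"
  assume "x \<noteq> 0" "y \<noteq> 0"
    and "hsetminus (prod_hop m1 m2 x x) (prod_hop m1 m2 y y) \<subseteq> P \<times> UNIV"
  moreover have "\<And>u v. m2 u v \<noteq> {}" using ring2 by (rule comm_mult_hyperring_nonempty)
  ultimately have sq: "hsetminus (m1 (fst x) (fst x)) (m1 (fst y) (fst y)) \<subseteq> P"
    using hsetminus_prod_hop_subset_Times_UNIV_iff by blast
  have zero_sq: "m1 0 0 \<subseteq> P" "m1 0 0 \<noteq> {}"
    using hyperideal_mult[OF hi hyperideal_zero[OF hi]] comm_mult_hyperring_nonempty[OF ring1]
    by auto
  note square_mem = sdf_absorbing_square_subset_imp_mem[OF sdf \<open>P \<noteq> {0}\<close>]
  consider "fst x = 0" | "fst y = 0" | "fst x \<noteq> 0" "fst y \<noteq> 0" by blast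
  then have "fst x - fst y \<in> P \<or> fst x + fst y \<in> P"
  proof cases
    case 1
    with sq have "hsetminus (m1 0 0) (m1 (fst y) (fst y)) \<subseteq> P" by simp
    then have "fst y \<in> P" using hsetminus_subset_hyperideal_right[OF hi zero_sq] square_mem
      by blast
    then show ?thesis using 1 hyperideal_uminus[OF hi] by simp
  next
    case 2
    with sq have "hsetminus (m1 (fst x) (fst x)) (m1 0 0) \<subseteq> P" by simp
    then have "fst x \<in> P" using hsetminus_subset_hyperideal_left[OF hi zero_sq] square_mem
      by blast
    then show ?thesis using 2 by simp
  next
    case 3
    then show ?thesis using sdf sq unfolding sdf_absorbing_def by blast
  qed
  then show "x - y \<in> P \<times> UNIV \<or> x + y \<in> P \<times> UNIV" by (simp add: mem_Times_iff)
qed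

theorem mainTheorem15:
  fixes m1 :: "('a::ab_group_add) hop" and m2 :: "('b::ab_group_add) hop"
    and P1 :: "'a set" and P2 :: "'b set"
  assumes "comm_mult_hyperring m1" and "has_identity m1"
    and "comm_mult_hyperring m2" and "has_identity m2"
    and "strong_C_hyperideal m1 P1" and "P1 \<noteq> {0}" and "P1 \<noteq> UNIV"
    and "strong_C_hyperideal m2 P2" and "P2 \<noteq> {0}" and "P2 \<noteq> UNIV"
  shows "sdf_absorbing m1 P1 \<longleftrightarrow> sdf_absorbing (prod_hop m1 m2) (P1 \<times> (UNIV :: 'b set))"
proof -
  have "hyperideal m1 P1"
    using \<open>strong_C_hyperideal m1 P1\<close> unfolding strong_C_hyperideal_def by blast
  then show ?thesis
    using sdf_absorbing_Times_UNIV sdf_absorbing_Times_UNIVD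
      \<open>comm_mult_hyperring m1\<close> \<open>comm_mult_hyperring m2\<close> \<open>P1 \<noteq> {0}\<close> by blast
qed

end
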